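(* For each $n$ let $0<p_n,q_n\le 1$, let $M=\lceil n^2/p_n\rceil$, and let $\alpha$ be any initial configuration of $n$ cards. Play $M$ moves of $p_n$-random $q_n$-proportion Bulgarian solitaire $\mathscr{B}(n,p_n,q_n)$ starting from $\alpha$. Then, with probability tending to $1$ as $n\to\infty$, every pile present in $\alpha$ has been completely consumed (contains no cards) after these $M$ moves.
   Context: $\mathscr{B}(n,p,q)$ ($0<p,q\le 1$) is played on $n$ identical cards distributed in piles. In one move, from each pile of size $h$ the top $\lceil qh\rceil$ cards are candidates; each candidate card is picked with probability $p$, independently of all other candidates; the picked cards are removed and together form one new pile. Piles are tracked individually (ordered by time of creation), so that one can follow what happens to each pile of the initial configuration. *)

theory Defs
  imports "HOL-Probability.Probability"
begin

text \<open>A configuration is the list of pile sizes, ordered by time of creation.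
  Piles are never deleted from the list (a consumed pile has size 0), so the
  piles of the initial configuration are exactly the first entries.\<close>

text \<open>Numbers of picked cards, independently for each pile: from a pile of
  size h the top ceiling(q h) cards are candidates, each picked with probability p.\<close>
fun picks :: "real \<Rightarrow> real \<Rightarrow> nat list \<Rightarrow> nat list pmf" where
  "picks p q [] = return_pmf []"
| "picks p q (h # hs) =
     bind_pmf (binomial_pmf (nat \<lceil>q * real h\<rceil>) p) (\<lambda>k.
     bind_pmf (picks p q hs) (\<lambda>ks. return_pmf (k # ks)))"

definition bs_step :: "real \<Rightarrow> real \<Rightarrow> nat list \<Rightarrow> nat list pmf" where
  "bs_step p q xs = map_pmf (\<lambda>ks. map2 (-) xs ks @ [sum_list ks]) (picks p q xs)"

fun bs_run :: "real \<Rightarrow> real \<Rightarrow> nat \<Rightarrow> nat list \<Rightarrow> nat list pmf" where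
  "bs_run p q 0 xs = return_pmf xs"
| "bs_run p q (Suc m) xs = bind_pmf (bs_run p q m xs) (bs_step p q)"

end

theory Submission
  imports Defs "HOL-Real_Asymp.Real_Asymp"
begin

text \<open>Give a pile of size h the potential 2^h (and an empty pile potential 0), and let \<Phi> be the
  total potential of the piles of the initial configuration. A nonempty pile has at least one
  candidate card, so with probability at least p it loses a card, which at least halves its
  potential; hence one move multiplies the expectation of \<Phi> by at most 1 - p/2. Initially
  \<Phi> \<le> 2^(n+1), and \<Phi> \<ge> 1 as long as some initial pile is nonempty, so by Markov's inequality
  that event has probability at most (1 - p/2)^M 2^(n+1) \<le> exp(-n^2/2) 2^(n+1) \<rightarrow> 0.\<close>

definition pile_potential :: "nat \<Rightarrow> nat" where
  "pile_potential h = (if h = 0 then 0 else 2 ^ h)"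

definition potential :: "nat \<Rightarrow> nat list \<Rightarrow> nat" where
  "potential L ys = (\<Sum>y\<leftarrow>take L ys. pile_potential y)"

lemma potential_0 [simp]: "potential 0 ys = 0"
  and potential_Nil [simp]: "potential L [] = 0"
  and potential_Cons [simp]: "potential (Suc L) (y # ys) = pile_potential y + potential L ys"
  by (simp_all add: potential_def)

lemma potential_append: "L \<le> length xs \<Longrightarrow> potential L (xs @ ys) = potential L xs"
  by (simp add: potential_def)

lemma potential_pos:
  assumes "i < L" "i < length ys" "ys ! i \<noteq> 0"
  shows "0 < potential L ys"
proof -
  have "ys ! i \<in> set (take L ys)"
    using assms by (metis in_set_conv_nth length_take min_less_iff_conj nth_take)
  then have "pile_potential (ys ! i) \<le> potential L ys"
    unfolding potential_def by (simp add: member_le_sum_list)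
  moreover have "0 < pile_potential (ys ! i)"
    using assms(3) by (simp add: pile_potential_def)
  ultimately show ?thesis by linarith
qed

lemma two_pow_add_le_two_pow_sum:
  assumes "1 \<le> a" "1 \<le> b"
  shows "2 ^ a + 2 ^ b \<le> (2 :: nat) ^ (a + b)"
proof -
  have "2 \<le> (2::nat) ^ a" "2 \<le> (2::nat) ^ b"
    using assms power_increasing[of 1 _ "2::nat"] by simp_all
  then have "2 ^ a + 2 ^ b \<le> (2::nat) ^ a * 2 ^ b"
    using mult_le_mono1[of 2 "2 ^ a" "2 ^ b"] mult_le_mono2[of 2 "2 ^ b" "2 ^ a"] by linarith
  then show ?thesis by (simp only: power_add)
qed

lemma potential_le: "potential L ys \<le> 2 ^ Suc (sum_list ys)"
proof (induction ys arbitrary: L)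
  case Nil then show ?case by simp
next
  case (Cons y ys)
  show ?case
  proof (cases L)
    case (Suc L')
    have "pile_potential y + 2 ^ Suc (sum_list ys) \<le> 2 ^ Suc (sum_list (y # ys))"
      using two_pow_add_le_two_pow_sum[of y "Suc (sum_list ys)"]
      by (simp add: pile_potential_def)
    then show ?thesis using Cons.IH[of L'] Suc by simp
  qed simp
qed

lemma double_pile_potential_diff_le:
  assumes "0 < k"
  shows "2 * pile_potential (h - k) \<le> pile_potential h"
proof (cases "k < h")
  case True
  then have "2 * 2 ^ (h - k) \<le> (2::nat) ^ h"
    using assms power_increasing[of "Suc (h - k)" h "2::nat"] by simp
  with True show ?thesis by (simp add: pile_potential_def)
qed (simp add: pile_potential_def)

lemma nn_integral_pile_potential_binomial_le:
  assumes p: "0 \<le> p" "p \<le> 1" and N: "0 < N"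
  shows "(\<integral>\<^sup>+k. of_nat (pile_potential (h - k)) \<partial>binomial_pmf N p)
           \<le> ennreal (1 - p / 2) * of_nat (pile_potential h)"
proof -
  define c where "c = real (pile_potential h) / 2"
  have halve: "of_nat (pile_potential (h - k)) \<le> ennreal c * (1 + indicator {0} k)" for k
  proof (cases "k = 0")
    case True
    have "ennreal c * (1 + indicator {0} k) = ennreal c * ennreal 2"
      using True by simp
    also have "\<dots> = of_nat (pile_potential h)"
      using ennreal_mult[of c 2] by (simp add: c_def ennreal_of_nat_eq_real_of_nat)
    finally show ?thesis using True by simp
  next
    case False
    then have "real (pile_potential (h - k)) \<le> c"
      using double_pile_potential_diff_le[of k h] unfolding c_def by linarith
    with False show ?thesis by (simp add: ennreal_of_nat_eq_real_of_nat ennreal_leI)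
  qed
  have "(\<integral>\<^sup>+k. of_nat (pile_potential (h - k)) \<partial>binomial_pmf N p)
        \<le> (\<integral>\<^sup>+k. ennreal c * (1 + indicator {0} k) \<partial>binomial_pmf N p)"
    by (intro nn_integral_mono halve)
  also have "\<dots> = ennreal c * (1 + ennreal ((1 - p) ^ N))"
    using p
    by (simp add: nn_integral_cmult nn_integral_add emeasure_pmf_single measure_pmf.emeasure_space_1)
  also have "\<dots> \<le> ennreal c * ennreal (2 - p)"
  proof -
    have "(1 - p) ^ N \<le> 1 - p"
      using p N power_decreasing[of 1 N "1 - p"] by simp
    have "1 + ennreal ((1 - p) ^ N) = ennreal (1 + (1 - p) ^ N)"
      using p by simp
    also have "\<dots> \<le> ennreal (2 - p)"
      using \<open>(1 - p) ^ N \<le> 1 - p\<close> by (intro ennreal_leI) simp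
    finally show ?thesis by (rule mult_left_mono) simp
  qed
  also have "\<dots> = ennreal (1 - p / 2) * of_nat (pile_potential h)"
    using p
    by (simp add: c_def ennreal_of_nat_eq_real_of_nat ennreal_mult'[symmetric] field_simps)
  finally show ?thesis .
qed

lemma nn_integral_pile_potential_pick_le:
  assumes "0 \<le> p" "p \<le> 1" "0 < q"
  shows "(\<integral>\<^sup>+k. of_nat (pile_potential (h - k)) \<partial>binomial_pmf (nat \<lceil>q * real h\<rceil>) p)
           \<le> ennreal (1 - p / 2) * of_nat (pile_potential h)"
proof (cases "h = 0")
  case False
  with assms have "0 < nat \<lceil>q * real h\<rceil>" by simp
  with assms show ?thesis by (intro nn_integral_pile_potential_binomial_le)
qed (simp add: pile_potential_def)

lemma length_picks: "ks \<in> set_pmf (picks p q xs) \<Longrightarrow> length ks = length xs"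
  by (induction xs arbitrary: ks) auto

lemma nn_integral_potential_picks_le:
  assumes "0 \<le> p" "p \<le> 1" "0 < q"
  shows "(\<integral>\<^sup>+ks. of_nat (potential L (map2 (-) xs ks)) \<partial>picks p q xs)
           \<le> ennreal (1 - p / 2) * of_nat (potential L xs)"
proof (induction xs arbitrary: L)
  case (Cons h hs)
  show ?case
  proof (cases L)
    case (Suc L')
    let ?B = "binomial_pmf (nat \<lceil>q * real h\<rceil>) p" and ?r = "ennreal (1 - p / 2)"
    have "(\<integral>\<^sup>+ks. of_nat (potential L (map2 (-) (h # hs) ks)) \<partial>picks p q (h # hs))
        = (\<integral>\<^sup>+k. of_nat (pile_potential (h - k))
              + (\<integral>\<^sup>+ks. of_nat (potential L' (map2 (-) hs ks)) \<partial>picks p q hs) \<partial>?B)"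
      using Suc by (simp add: nn_integral_add measure_pmf.emeasure_space_1)
    also have "\<dots> \<le> (\<integral>\<^sup>+k. of_nat (pile_potential (h - k)) + ?r * of_nat (potential L' hs) \<partial>?B)"
      by (intro nn_integral_mono add_left_mono Cons.IH)
    also have "\<dots> = (\<integral>\<^sup>+k. of_nat (pile_potential (h - k)) \<partial>?B) + ?r * of_nat (potential L' hs)"
      by (simp add: nn_integral_add measure_pmf.emeasure_space_1)
    also have "\<dots> \<le> ?r * of_nat (pile_potential h) + ?r * of_nat (potential L' hs)"
      by (intro add_right_mono nn_integral_pile_potential_pick_le assms)
    also have "\<dots> = ?r * of_nat (potential L (h # hs))"
      using Suc by (simp add: distrib_left)
    finally show ?thesis .
  qed simp
qed simp

lemma nn_integral_potential_bs_step_le: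
  assumes "0 \<le> p" "p \<le> 1" "0 < q" and L: "L \<le> length xs"
  shows "(\<integral>\<^sup>+ys. of_nat (potential L ys) \<partial>bs_step p q xs)
           \<le> ennreal (1 - p / 2) * of_nat (potential L xs)"
proof -
  have "(\<integral>\<^sup>+ys. of_nat (potential L ys) \<partial>bs_step p q xs)
      = (\<integral>\<^sup>+ks. of_nat (potential L (map2 (-) xs ks)) \<partial>picks p q xs)"
  proof -
    have "potential L (map2 (-) xs ks @ [sum_list ks]) = potential L (map2 (-) xs ks)"
      if "ks \<in> set_pmf (picks p q xs)" for ks
      using L length_picks[OF that] by (intro potential_append) simp
    then show ?thesis
      unfolding bs_step_def by (auto intro!: nn_integral_cong_AE simp: AE_measure_pmf_iff)
  qed
  also have "\<dots> \<le> ennreal (1 - p / 2) * of_nat (potential L xs)"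
    by (rule nn_integral_potential_picks_le[OF assms(1-3)])
  finally show ?thesis .
qed

lemma length_bs_run: "ys \<in> set_pmf (bs_run p q m xs) \<Longrightarrow> length ys = length xs + m"
  by (induction m arbitrary: ys) (auto simp: bs_step_def dest: length_picks)

lemma nn_integral_potential_bs_run_le:
  assumes "0 \<le> p" "p \<le> 1" "0 < q" and L: "L \<le> length xs"
  shows "(\<integral>\<^sup>+ys. of_nat (potential L ys) \<partial>bs_run p q m xs)
           \<le> ennreal (1 - p / 2) ^ m * of_nat (potential L xs)"
proof (induction m)
  case (Suc m)
  have "(\<integral>\<^sup>+ys. of_nat (potential L ys) \<partial>bs_run p q (Suc m) xs)
      = (\<integral>\<^sup>+ys. (\<integral>\<^sup>+zs. of_nat (potential L zs) \<partial>bs_step p q ys) \<partial>bs_run p q m xs)"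
    by simp
  also have "\<dots> \<le> (\<integral>\<^sup>+ys. ennreal (1 - p / 2) * of_nat (potential L ys) \<partial>bs_run p q m xs)"
    using L by (intro nn_integral_mono_AE)
      (auto simp: AE_measure_pmf_iff intro!: nn_integral_potential_bs_step_le assms dest!: length_bs_run)
  also have "\<dots> \<le> ennreal (1 - p / 2) * (ennreal (1 - p / 2) ^ m * of_nat (potential L xs))"
    by (simp add: nn_integral_cmult mult_left_mono Suc.IH)
  finally show ?case by (simp add: mult.assoc)
qed simp

lemma prob_initial_pile_nonempty_le:
  assumes "0 \<le> p" "p \<le> 1" "0 < q"
  shows "measure_pmf.prob (bs_run p q m xs) {ys. \<exists>i < length xs. ys ! i \<noteq> 0}
           \<le> (1 - p / 2) ^ m * 2 ^ Suc (sum_list xs)"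
proof -
  let ?E = "{ys. \<exists>i < length xs. ys ! i \<noteq> 0}"
  have "emeasure (bs_run p q m xs) ?E = (\<integral>\<^sup>+ys. indicator ?E ys \<partial>bs_run p q m xs)"
    by simp
  also have "\<dots> \<le> (\<integral>\<^sup>+ys. of_nat (potential (length xs) ys) \<partial>bs_run p q m xs)"
  proof (intro nn_integral_mono_AE, unfold AE_measure_pmf_iff, intro ballI)
    fix ys assume "ys \<in> set_pmf (bs_run p q m xs)"
    then have "length xs \<le> length ys" by (simp add: length_bs_run)
    show "indicator ?E ys \<le> (of_nat (potential (length xs) ys) :: ennreal)"
    proof (cases "ys \<in> ?E")
      case True
      with \<open>length xs \<le> length ys\<close> have "1 \<le> potential (length xs) ys"
        by (auto simp: Suc_le_eq intro: potential_pos)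
      have "indicator ?E ys = (1 :: ennreal)"
        using True by simp
      also have "\<dots> \<le> of_nat (potential (length xs) ys)"
        using \<open>1 \<le> potential (length xs) ys\<close> by (metis of_nat_1 of_nat_mono)
      finally show ?thesis .
    qed simp
  qed
  also have "\<dots> \<le> ennreal (1 - p / 2) ^ m * of_nat (potential (length xs) xs)"
    by (rule nn_integral_potential_bs_run_le[OF assms]) simp
  also have "\<dots> = ennreal ((1 - p / 2) ^ m * real (potential (length xs) xs))"
    using assms by (simp add: ennreal_power ennreal_mult ennreal_of_nat_eq_real_of_nat)
  also have "\<dots> \<le> ennreal ((1 - p / 2) ^ m * 2 ^ Suc (sum_list xs))"
  proof (intro ennreal_leI mult_left_mono)
    show "real (potential (length xs) xs) \<le> 2 ^ Suc (sum_list xs)"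
      using potential_le[of "length xs" xs] by (metis of_nat_le_iff of_nat_numeral of_nat_power)
  qed (use assms in simp)
  finally show ?thesis
    using assms by (simp add: measure_pmf.emeasure_eq_measure)
qed

lemma prob_initial_piles_consumed_ge:
  assumes "0 \<le> p" "p \<le> 1" "0 < q"
  shows "1 - (1 - p / 2) ^ m * 2 ^ Suc (sum_list xs)
           \<le> measure_pmf.prob (bs_run p q m xs) {ys. \<forall>i < length xs. ys ! i = 0}"
proof -
  let ?P = "bs_run p q m xs" and ?E = "{ys. \<exists>i < length xs. ys ! i \<noteq> 0}"
  have "measure_pmf.prob ?P {ys. \<forall>i < length xs. ys ! i = 0}
      = measure_pmf.prob ?P (UNIV - ?E)"
    by (rule arg_cong[where f = "measure_pmf.prob ?P"]) auto
  also have "\<dots> = 1 - measure_pmf.prob ?P ?E"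
    using measure_pmf.prob_compl[of ?E ?P] by simp
  finally show ?thesis
    using prob_initial_pile_nonempty_le[OF assms, of m xs] by linarith
qed

lemma pow_one_minus_half_ceiling_le_exp:
  fixes p x :: real
  assumes "0 < p" "p \<le> 1"
  shows "(1 - p / 2) ^ nat \<lceil>x / p\<rceil> \<le> exp (- x / 2)"
proof -
  have "(1 - p / 2) ^ nat \<lceil>x / p\<rceil> \<le> exp (- p / 2) ^ nat \<lceil>x / p\<rceil>"
    using assms exp_ge_add_one_self[of "- p / 2"] by (intro power_mono) auto
  also have "\<dots> = exp (- (p * nat \<lceil>x / p\<rceil>) / 2)"
    by (simp add: exp_of_nat_mult[symmetric] mult.commute)
  also have "\<dots> \<le> exp (- x / 2)"
    using assms real_nat_ceiling_ge[of "x / p"] by (simp add: divide_le_eq mult.commute)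
  finally show ?thesis .
qed

theorem lemma4:
  fixes p q :: "nat \<Rightarrow> real" and \<alpha> :: "nat \<Rightarrow> nat list"
  assumes "\<And>n. 0 < p n \<and> p n \<le> 1"
    and "\<And>n. 0 < q n \<and> q n \<le> 1"
    and "\<And>n. sum_list (\<alpha> n) = n \<and> 0 \<notin> set (\<alpha> n)"
  shows "(\<lambda>n. measure_pmf.prob (bs_run (p n) (q n) (nat \<lceil>real n ^ 2 / p n\<rceil>) (\<alpha> n))
             {ys. \<forall>i < length (\<alpha> n). ys ! i = 0}) \<longlonglongrightarrow> 1"
proof -
  let ?M = "\<lambda>n. nat \<lceil>real n ^ 2 / p n\<rceil>"
  let ?consumed = "\<lambda>n. measure_pmf.prob (bs_run (p n) (q n) (?M n) (\<alpha> n))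
                          {ys. \<forall>i < length (\<alpha> n). ys ! i = 0}"
  define bound where "bound n = exp (- (real n ^ 2) / 2) * 2 ^ Suc n" for n :: nat
  have consumed_ge: "1 - bound n \<le> ?consumed n" for n
  proof -
    have p: "0 < p n" "p n \<le> 1" and "0 < q n" and sum: "sum_list (\<alpha> n) = n"
      using assms by auto
    have "(1 - p n / 2) ^ ?M n * 2 ^ Suc (sum_list (\<alpha> n)) \<le> bound n"
      unfolding bound_def sum
      by (rule mult_right_mono[OF pow_one_minus_half_ceiling_le_exp[OF p]]) simp
    moreover have "1 - (1 - p n / 2) ^ ?M n * 2 ^ Suc (sum_list (\<alpha> n)) \<le> ?consumed n"
      using p \<open>0 < q n\<close> by (intro prob_initial_piles_consumed_ge) auto
    ultimately show ?thesis
      by linarith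
  qed
  have "bound \<longlonglongrightarrow> 0"
    unfolding bound_def by real_asymp
  then have "(\<lambda>n. 1 - bound n) \<longlonglongrightarrow> 1 - 0"
    by (intro tendsto_diff tendsto_const)
  then have "(\<lambda>n. 1 - bound n) \<longlonglongrightarrow> 1"
    by simp
  then show ?thesis
  proof (rule tendsto_sandwich[rotated 2, where h = "\<lambda>n. 1"])
    show "\<forall>\<^sub>F n in sequentially. 1 - bound n \<le> ?consumed n"
      using consumed_ge by (intro always_eventually allI)
  qed simp_all
qed

end
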